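(* Let $\mathcal{Q}\subseteq 2^E$ ($E$ finite) be homogeneous, i.e. all members of $\mathcal{Q}$ have the same cardinality. If $\mathcal{Q}$ is weakly Rayleigh then $\mathcal{Q}$ is the set of bases of a matroid on $E$.
   Context: For $\omega:2^E\to[0,\infty)$ not identically zero, $Z(\omega;\mathbf{y})=\sum_S\omega(S)\prod_{e\in S}y_e$; with subscripts denoting partial derivatives, $Z$ is Rayleigh if $Z_eZ_f-Z_{ef}Z\ge0$ for all distinct $e,f$ and all positive $\mathbf{y}$. $\mathcal{Q}$ is weakly Rayleigh if some $\omega\ge0$ with $\{S:\omega(S)>0\}=\mathcal{Q}$ has $Z(\omega;\mathbf{y})$ Rayleigh. *)

theory Defs
  imports "HOL-Analysis.Analysis"
begin

definition genpoly :: "'a set \<Rightarrow> ('a set \<Rightarrow> real) \<Rightarrow> ('a \<Rightarrow> real) \<Rightarrow> real" where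
  "genpoly E \<omega> y = (\<Sum>S\<in>Pow E. \<omega> S * (\<Prod>e\<in>S. y e))"

definition pderiv_var :: "'a \<Rightarrow> (('a \<Rightarrow> real) \<Rightarrow> real) \<Rightarrow> ('a \<Rightarrow> real) \<Rightarrow> real" where
  "pderiv_var e F y = deriv (\<lambda>t. F (y(e := t))) (y e)"

definition rayleigh :: "'a set \<Rightarrow> (('a \<Rightarrow> real) \<Rightarrow> real) \<Rightarrow> bool" where
  "rayleigh E Z \<longleftrightarrow>
     (\<forall>e\<in>E. \<forall>f\<in>E. e \<noteq> f \<longrightarrow> (\<forall>y. (\<forall>x\<in>E. y x > 0) \<longrightarrow>
        pderiv_var e Z y * pderiv_var f Z y - pderiv_var e (pderiv_var f Z) y * Z y \<ge> 0))"

definition weakly_rayleigh :: "'a set \<Rightarrow> 'a set set \<Rightarrow> bool" where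
  "weakly_rayleigh E Q \<longleftrightarrow>
     (\<exists>\<omega>. (\<forall>S\<in>Pow E. \<omega> S \<ge> 0) \<and> (\<exists>S\<in>Pow E. \<omega> S \<noteq> 0) \<and>
          {S\<in>Pow E. \<omega> S > 0} = Q \<and> rayleigh E (genpoly E \<omega>))"

definition matroid_bases :: "'a set \<Rightarrow> 'a set set \<Rightarrow> bool" where
  "matroid_bases E Q \<longleftrightarrow> Q \<subseteq> Pow E \<and> Q \<noteq> {} \<and>
     (\<forall>B1\<in>Q. \<forall>B2\<in>Q. \<forall>e\<in>B1 - B2. \<exists>f\<in>B2 - B1. insert f (B1 - {e}) \<in> Q)"

end

theory Submission
  imports Defs
begin

text \<open>Suppose the exchange axiom fails for bases \<open>B1, B2\<close> and \<open>e \<in> B1 - B2\<close>. Among the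
  supports avoiding \<open>e\<close> inside \<open>B1 \<union> B2\<close> choose \<open>B3\<close> with \<open>k = |B3 - B1|\<close> minimal;
  \<open>k = 1\<close> would be an exchange, so some \<open>g \<noteq> e\<close> lies in \<open>B1 - B3\<close>. Evaluate \<open>Z\<close> at the
  point that is \<open>1\<close> on \<open>B1\<close>, \<open>t\<close> on \<open>B2 - B1\<close> and \<open>t^(k+1)\<close> elsewhere, and split
  \<open>Z = A + B + C + D\<close> according to which of \<open>e, g\<close> a monomial contains. There the Rayleigh
  inequality for \<open>e, g\<close> reads \<open>A D \<le> B C\<close>. But \<open>A \<ge> \<omega>(B3) t^k\<close> and \<open>D \<ge> \<omega>(B1)\<close>, while
  homogeneity forces \<open>B = O(t)\<close> and the minimality of \<open>B3\<close> forces \<open>C = O(t^k)\<close>; hence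
  \<open>\<omega>(B1) \<omega>(B3) = O(t)\<close>, which is absurd as \<open>t \<rightarrow> 0\<close>.\<close>

definition filter_weight :: "('a set \<Rightarrow> bool) \<Rightarrow> ('a set \<Rightarrow> real) \<Rightarrow> 'a set \<Rightarrow> real" where
  "filter_weight P \<omega> S = (if P S then \<omega> S else 0)"

lemma filter_weight_filter_weight [simp]:
  "filter_weight P (filter_weight R \<omega>) = filter_weight (\<lambda>S. P S \<and> R S) \<omega>"
  by (auto simp: filter_weight_def)

lemma genpoly_update_at_one:
  assumes "finite E" "y e = 1"
  shows "genpoly E \<omega> (y(e := t))
    = genpoly E (filter_weight (\<lambda>S. e \<notin> S) \<omega>) y + t * genpoly E (filter_weight (\<lambda>S. e \<in> S) \<omega>) y"
  unfolding genpoly_def sum_distrib_left sum.distrib[symmetric]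
proof (rule sum.cong)
  fix S assume "S \<in> Pow E"
  then have "finite S" using assms(1) finite_subset by auto
  show "\<omega> S * prod (y(e := t)) S
      = filter_weight (\<lambda>S. e \<notin> S) \<omega> S * prod y S + t * (filter_weight (\<lambda>S. e \<in> S) \<omega> S * prod y S)"
  proof (cases "e \<in> S")
    case True
    have "prod (y(e := t)) S = t * prod (y(e := t)) (S - {e})"
      by (rule prod.remove[OF \<open>finite S\<close> True, of "y(e := t)", unfolded fun_upd_same])
    also have "prod (y(e := t)) (S - {e}) = prod y (S - {e})"
      by (rule prod.cong) auto
    also have "\<dots> = prod y S"
      by (simp add: prod.remove[OF \<open>finite S\<close> True, of y] assms(2))
    finally show ?thesis using True by (simp add: filter_weight_def)
  next
    case False
    then have "prod (y(e := t)) S = prod y S" by (intro prod.cong) auto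
    then show ?thesis using False by (simp add: filter_weight_def)
  qed
qed simp

lemma pderiv_var_genpoly_at_one:
  assumes "finite E" "y e = 1"
  shows "pderiv_var e (genpoly E \<omega>) y = genpoly E (filter_weight (\<lambda>S. e \<in> S) \<omega>) y"
  unfolding pderiv_var_def genpoly_update_at_one[of E y e, OF assms]
  by (rule DERIV_imp_deriv) (auto intro!: derivative_eq_intros)

lemma pderiv_var_pderiv_var_genpoly_at_one:
  assumes "finite E" "e \<noteq> g" "y e = 1" "y g = 1"
  shows "pderiv_var e (pderiv_var g (genpoly E \<omega>)) y
    = genpoly E (filter_weight (\<lambda>S. e \<in> S \<and> g \<in> S) \<omega>) y"
proof -
  have "pderiv_var g (genpoly E \<omega>) (y(e := t)) = genpoly E (filter_weight (\<lambda>S. g \<in> S) \<omega>) (y(e := t))" for t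
    using assms by (intro pderiv_var_genpoly_at_one) auto
  then have "pderiv_var e (pderiv_var g (genpoly E \<omega>)) y
      = pderiv_var e (genpoly E (filter_weight (\<lambda>S. g \<in> S) \<omega>)) y"
    unfolding pderiv_var_def by simp
  also have "\<dots> = genpoly E (filter_weight (\<lambda>S. e \<in> S \<and> g \<in> S) \<omega>) y"
    using assms by (simp add: pderiv_var_genpoly_at_one)
  finally show ?thesis .
qed

lemma rayleigh_genpoly_at_ones:
  assumes "finite E" "rayleigh E (genpoly E \<omega>)" "e \<in> E" "g \<in> E" "e \<noteq> g"
    and "\<forall>x\<in>E. y x > 0" "y e = 1" "y g = 1"
  shows "genpoly E (filter_weight (\<lambda>S. e \<notin> S \<and> g \<notin> S) \<omega>) y
           * genpoly E (filter_weight (\<lambda>S. e \<in> S \<and> g \<in> S) \<omega>) y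
         \<le> genpoly E (filter_weight (\<lambda>S. e \<in> S \<and> g \<notin> S) \<omega>) y
           * genpoly E (filter_weight (\<lambda>S. e \<notin> S \<and> g \<in> S) \<omega>) y"
    (is "?A * ?D \<le> ?B * ?C")
proof -
  have "genpoly E \<omega> y = ?A + ?B + ?C + ?D"
    unfolding genpoly_def sum.distrib[symmetric] by (rule sum.cong) (auto simp: filter_weight_def)
  moreover have "pderiv_var e (genpoly E \<omega>) y = ?B + ?D"
    unfolding pderiv_var_genpoly_at_one[of E y e, OF assms(1,7)] genpoly_def sum.distrib[symmetric]
    by (rule sum.cong) (auto simp: filter_weight_def)
  moreover have "pderiv_var g (genpoly E \<omega>) y = ?C + ?D"
    unfolding pderiv_var_genpoly_at_one[of E y g, OF assms(1,8)] genpoly_def sum.distrib[symmetric]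
    by (rule sum.cong) (auto simp: filter_weight_def)
  moreover have "pderiv_var e (pderiv_var g (genpoly E \<omega>)) y = ?D"
    by (rule pderiv_var_pderiv_var_genpoly_at_one[OF assms(1,5,7,8)])
  moreover have "pderiv_var e (genpoly E \<omega>) y * pderiv_var g (genpoly E \<omega>) y
      - pderiv_var e (pderiv_var g (genpoly E \<omega>)) y * genpoly E \<omega> y \<ge> 0"
    using assms(2-6) unfolding rayleigh_def by blast
  ultimately show ?thesis by (simp add: algebra_simps)
qed

lemma genpoly_filter_weight_ge:
  assumes "finite E" "\<forall>S\<in>Pow E. \<omega> S \<ge> 0" "\<forall>x. y x \<ge> 0" "S \<subseteq> E" "P S"
  shows "\<omega> S * prod y S \<le> genpoly E (filter_weight P \<omega>) y"
proof -
  have "\<omega> S * prod y S = filter_weight P \<omega> S * prod y S"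
    using assms(5) by (simp add: filter_weight_def)
  also have "\<dots> \<le> genpoly E (filter_weight P \<omega>) y"
    unfolding genpoly_def using assms
    by (intro member_le_sum) (auto simp: filter_weight_def prod_nonneg)
  finally show ?thesis .
qed

lemma genpoly_filter_weight_le:
  assumes "finite E" "\<forall>S\<in>Pow E. \<omega> S \<ge> 0" "c \<ge> 0"
    and "\<forall>S\<in>Pow E. P S \<and> \<omega> S > 0 \<longrightarrow> prod y S \<le> c"
  shows "genpoly E (filter_weight P \<omega>) y \<le> (\<Sum>S\<in>Pow E. \<omega> S) * c"
  unfolding genpoly_def sum_distrib_right
proof (rule sum_mono)
  fix S assume S: "S \<in> Pow E"
  show "filter_weight P \<omega> S * prod y S \<le> \<omega> S * c"
  proof (cases "P S \<and> \<omega> S > 0")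
    case True
    then show ?thesis using assms(4) S by (simp add: filter_weight_def)
  next
    case False
    moreover have "\<omega> S \<ge> 0" using assms(2) S by blast
    ultimately show ?thesis using assms(3) by (auto simp: filter_weight_def)
  qed
qed

lemma prod_le_factor:
  fixes y :: "'a \<Rightarrow> real"
  assumes "finite T" "x \<in> T" "\<forall>z\<in>T. 0 \<le> y z \<and> y z \<le> 1"
  shows "prod y T \<le> y x"
proof -
  have "prod y T = y x * prod y (T - {x})"
    by (rule prod.remove[OF assms(1,2)])
  also have "\<dots> \<le> y x"
    using assms by (intro mult_right_le_one_le prod_le_1 prod_nonneg) auto
  finally show ?thesis .
qed

definition exchange_point :: "'a set \<Rightarrow> 'a set \<Rightarrow> real \<Rightarrow> real \<Rightarrow> 'a \<Rightarrow> real" where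
  "exchange_point B1 B2 t s x = (if x \<in> B1 then 1 else if x \<in> B2 then t else s)"

lemma exchange_point_pos: "0 < s \<Longrightarrow> 0 < t \<Longrightarrow> 0 < exchange_point B1 B2 t s x"
  by (simp add: exchange_point_def)

lemma prod_exchange_point_inside:
  assumes "finite S" "S \<subseteq> B1 \<union> B2"
  shows "prod (exchange_point B1 B2 t s) S = t ^ card (S - B1)"
proof -
  have "prod (exchange_point B1 B2 t s) S
      = prod (exchange_point B1 B2 t s) (S - B1) * prod (exchange_point B1 B2 t s) (S \<inter> B1)"
    using prod.subset_diff[of "S \<inter> B1" S] assms(1) by (simp add: Diff_Int)
  also have "prod (exchange_point B1 B2 t s) (S - B1) = (\<Prod>x\<in>S - B1. t)"
    using assms(2) by (intro prod.cong) (auto simp: exchange_point_def)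
  also have "prod (exchange_point B1 B2 t s) (S \<inter> B1) = 1"
    by (intro prod.neutral) (simp add: exchange_point_def)
  finally show ?thesis by simp
qed

lemma prod_exchange_point_le:
  assumes "finite S" "x \<in> S" "0 \<le> s" "s \<le> 1" "0 \<le> t" "t \<le> 1"
  shows "prod (exchange_point B1 B2 t s) S \<le> exchange_point B1 B2 t s x"
  using assms by (intro prod_le_factor) (auto simp: exchange_point_def)

lemma genpoly_exchange_point_off_basis_le:
  assumes "finite E" "\<forall>S\<in>Pow E. \<omega> S \<ge> 0" "0 < s" "s \<le> t" "t \<le> 1"
    and "\<forall>S\<in>Pow E. P S \<and> \<omega> S > 0 \<longrightarrow> \<not> S \<subseteq> B1"
  shows "genpoly E (filter_weight P \<omega>) (exchange_point B1 B2 t s) \<le> (\<Sum>S\<in>Pow E. \<omega> S) * t"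
proof (intro genpoly_filter_weight_le[OF assms(1,2)] ballI impI)
  fix S assume S: "S \<in> Pow E" "P S \<and> \<omega> S > 0"
  then obtain x where "x \<in> S" "x \<notin> B1" using assms(6) by blast
  have "prod (exchange_point B1 B2 t s) S \<le> exchange_point B1 B2 t s x"
    using S assms(1,3-5) \<open>x \<in> S\<close> finite_subset by (intro prod_exchange_point_le) auto
  also have "\<dots> \<le> t" using \<open>x \<notin> B1\<close> \<open>s \<le> t\<close> by (simp add: exchange_point_def)
  finally show "prod (exchange_point B1 B2 t s) S \<le> t" .
qed (use assms(3,4) in simp)

lemma genpoly_exchange_point_far_le:
  assumes "finite E" "\<forall>S\<in>Pow E. \<omega> S \<ge> 0" "0 < s" "s \<le> t ^ k" "0 < t" "t \<le> 1"
    and "\<forall>S\<in>Pow E. P S \<and> \<omega> S > 0 \<and> S \<subseteq> B1 \<union> B2 \<longrightarrow> k \<le> card (S - B1)"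
  shows "genpoly E (filter_weight P \<omega>) (exchange_point B1 B2 t s) \<le> (\<Sum>S\<in>Pow E. \<omega> S) * t ^ k"
proof (intro genpoly_filter_weight_le[OF assms(1,2)] ballI impI)
  fix S assume S: "S \<in> Pow E" "P S \<and> \<omega> S > 0"
  then have "finite S" using assms(1) finite_subset by blast
  show "prod (exchange_point B1 B2 t s) S \<le> t ^ k"
  proof (cases "S \<subseteq> B1 \<union> B2")
    case True
    then have "k \<le> card (S - B1)" using assms(7) S by blast
    then show ?thesis
      using prod_exchange_point_inside[OF \<open>finite S\<close> True] assms(5,6) by (simp add: power_decreasing)
  next
    case False
    then obtain x where "x \<in> S" "x \<notin> B1 \<union> B2" by blast
    have "s \<le> 1" using assms(4-6) power_le_one[of t k] by linarith
    then have "prod (exchange_point B1 B2 t s) S \<le> exchange_point B1 B2 t s x"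
      using \<open>finite S\<close> \<open>x \<in> S\<close> assms(3,5,6) by (intro prod_exchange_point_le) auto
    also have "\<dots> = s" using \<open>x \<notin> B1 \<union> B2\<close> by (simp add: exchange_point_def)
    finally show ?thesis using assms(4) by linarith
  qed
qed (use assms(5) in simp)

lemma no_exchange_minimal_witness:
  assumes "finite B1" "finite B2" "B1 \<in> Q" "B2 \<in> Q" "e \<in> B1 - B2"
    and hom: "\<forall>A\<in>Q. \<forall>B\<in>Q. card A = card B"
    and no_exchange: "\<forall>f\<in>B2 - B1. insert f (B1 - {e}) \<notin> Q"
  obtains B3 g where "B3 \<in> Q" "B3 \<subseteq> B1 \<union> B2" "e \<notin> B3" "g \<in> B1 - B3" "g \<noteq> e"
    and "\<forall>S\<in>Q. e \<notin> S \<longrightarrow> S \<subseteq> B1 \<union> B2 \<longrightarrow> card (B3 - B1) \<le> card (S - B1)"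
proof -
  define M where "M = {S\<in>Q. e \<notin> S \<and> S \<subseteq> B1 \<union> B2}"
  have "B2 \<in> M" using assms(4,5) unfolding M_def by auto
  then obtain B3 where "B3 \<in> M" and B3_min: "\<And>S. S \<in> M \<Longrightarrow> card (B3 - B1) \<le> card (S - B1)"
    using ex_has_least_nat[of "\<lambda>S. S \<in> M" B2 "\<lambda>S. card (S - B1)"] by blast
  then have B3: "B3 \<in> Q" "B3 \<subseteq> B1 \<union> B2" "e \<notin> B3" unfolding M_def by auto
  have "\<not> B1 - B3 \<subseteq> {e}"
  proof
    assume "B1 - B3 \<subseteq> {e}"
    then have B1_diff: "B1 - B3 = {e}" using assms(5) B3(3) by auto
    have "finite B3" using B3(2) assms(1,2) finite_subset by auto
    have "card B1 = card B3" using hom assms(3) B3(1) by blast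
    then have "card (B3 - B1) = card (B1 - B3)"
      using card_le_sym_Diff \<open>finite B3\<close> assms(1) by (metis le_antisym order_refl)
    then obtain f where f: "B3 - B1 = {f}" using B1_diff by (auto simp: card_1_singleton_iff)
    then have "B3 = insert f (B1 - {e})" using B1_diff by blast
    moreover have "f \<in> B2 - B1" using f B3(2) by auto
    ultimately show False using no_exchange B3(1) by blast
  qed
  then obtain g where "g \<in> B1 - B3" "g \<noteq> e" by blast
  moreover have "\<forall>S\<in>Q. e \<notin> S \<longrightarrow> S \<subseteq> B1 \<union> B2 \<longrightarrow> card (B3 - B1) \<le> card (S - B1)"
    using B3_min unfolding M_def by blast
  ultimately show ?thesis using B3 that by blast
qed

lemma rayleigh_minimal_witness_bound:
  assumes "finite E" and nonneg: "\<forall>S\<in>Pow E. \<omega> S \<ge> 0"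
    and supp: "Q = {S\<in>Pow E. \<omega> S > 0}" and hom: "\<forall>A\<in>Q. \<forall>B\<in>Q. card A = card B"
    and ray: "rayleigh E (genpoly E \<omega>)"
    and "B1 \<in> Q" "B3 \<in> Q" "B3 \<subseteq> B1 \<union> B2" "e \<in> B1" "e \<notin> B3" "g \<in> B1 - B3" "g \<noteq> e"
    and minimal: "\<forall>S\<in>Q. e \<notin> S \<longrightarrow> S \<subseteq> B1 \<union> B2 \<longrightarrow> card (B3 - B1) \<le> card (S - B1)"
    and "0 < t" "t \<le> 1"
  shows "\<omega> B1 * \<omega> B3 \<le> (\<Sum>S\<in>Pow E. \<omega> S)\<^sup>2 * t"
proof -
  define W where "W = (\<Sum>S\<in>Pow E. \<omega> S)"
  define k where "k = card (B3 - B1)"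
  define y where "y = exchange_point B1 B2 t (t ^ (k + 1))"
  have "0 < t ^ k" "0 < t ^ (k + 1)" "t ^ (k + 1) \<le> t ^ k" "t ^ k \<le> 1"
    using \<open>0 < t\<close> \<open>t \<le> 1\<close> by (auto intro: power_decreasing power_le_one simp del: power_Suc)
  then have "t ^ (k + 1) \<le> t" using \<open>0 < t\<close> by (simp add: mult_left_le)
  have y_pos: "\<forall>x. 0 < y x"
    unfolding y_def by (intro allI exchange_point_pos \<open>0 < t ^ (k + 1)\<close> \<open>0 < t\<close>)
  then have y_nonneg: "\<forall>x. 0 \<le> y x" by (simp add: less_imp_le)
  have B1E: "B1 \<subseteq> E" and B3E: "B3 \<subseteq> E" using supp \<open>B1 \<in> Q\<close> \<open>B3 \<in> Q\<close> by auto
  then have "finite B1" "finite B3" using assms(1) finite_subset by auto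
  have "e \<in> E" "g \<in> E" "y e = 1" "y g = 1"
    using B1E \<open>e \<in> B1\<close> \<open>g \<in> B1 - B3\<close> by (auto simp: y_def exchange_point_def)
  with y_pos have AD_le_BC:
    "genpoly E (filter_weight (\<lambda>S. e \<notin> S \<and> g \<notin> S) \<omega>) y
       * genpoly E (filter_weight (\<lambda>S. e \<in> S \<and> g \<in> S) \<omega>) y
     \<le> genpoly E (filter_weight (\<lambda>S. e \<in> S \<and> g \<notin> S) \<omega>) y
       * genpoly E (filter_weight (\<lambda>S. e \<notin> S \<and> g \<in> S) \<omega>) y"
    (is "?A * ?D \<le> ?B * ?C")
    using \<open>g \<noteq> e\<close> by (intro rayleigh_genpoly_at_ones[OF assms(1) ray]) auto
  have A_ge: "\<omega> B3 * t ^ k \<le> ?A"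
    using genpoly_filter_weight_ge[OF assms(1) nonneg y_nonneg B3E, of "\<lambda>S. e \<notin> S \<and> g \<notin> S"]
      prod_exchange_point_inside[OF \<open>finite B3\<close> \<open>B3 \<subseteq> B1 \<union> B2\<close>] \<open>e \<notin> B3\<close> \<open>g \<in> B1 - B3\<close>
    by (simp add: y_def k_def)
  have D_ge: "\<omega> B1 \<le> ?D"
    using genpoly_filter_weight_ge[OF assms(1) nonneg y_nonneg B1E, of "\<lambda>S. e \<in> S \<and> g \<in> S"]
      prod_exchange_point_inside[OF \<open>finite B1\<close>] \<open>e \<in> B1\<close> \<open>g \<in> B1 - B3\<close> by (simp add: y_def)
  have "\<not> S \<subseteq> B1" if "S \<in> Pow E" "g \<notin> S" "\<omega> S > 0" for S
    using that supp hom \<open>B1 \<in> Q\<close> \<open>finite B1\<close> \<open>g \<in> B1 - B3\<close> card_subset_eq by blast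
  then have B_le: "?B \<le> W * t"
    unfolding W_def y_def
    by (intro genpoly_exchange_point_off_basis_le[OF assms(1) nonneg \<open>0 < t ^ (k + 1)\<close> \<open>t ^ (k + 1) \<le> t\<close> \<open>t \<le> 1\<close>])
      auto
  have C_le: "?C \<le> W * t ^ k"
    unfolding W_def y_def using minimal supp \<open>0 < t\<close> \<open>t \<le> 1\<close> \<open>0 < t ^ (k + 1)\<close> \<open>t ^ (k + 1) \<le> t ^ k\<close>
    by (intro genpoly_exchange_point_far_le[OF assms(1) nonneg]) (auto simp: k_def)
  have "0 \<le> \<omega> B1" "0 \<le> \<omega> B3" "0 \<le> W" using nonneg B1E B3E by (auto simp: W_def intro: sum_nonneg)
  have "\<omega> B1 * (\<omega> B3 * t ^ k) \<le> ?D * ?A"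
    by (rule mult_mono[OF D_ge A_ge]) (use \<open>0 \<le> \<omega> B1\<close> \<open>0 \<le> \<omega> B3\<close> \<open>0 < t ^ k\<close> D_ge in auto)
  also have "\<dots> \<le> ?B * ?C" using AD_le_BC by (simp only: mult.commute)
  also have "\<dots> \<le> (W * t) * (W * t ^ k)"
  proof (rule mult_mono[OF B_le C_le])
    show "0 \<le> ?C"
      unfolding genpoly_def filter_weight_def using nonneg y_nonneg by (intro sum_nonneg) (simp add: prod_nonneg)
  qed (use \<open>0 \<le> W\<close> \<open>0 < t\<close> in simp)
  finally have "(\<omega> B1 * \<omega> B3) * t ^ k \<le> (W\<^sup>2 * t) * t ^ k"
    by (simp add: power2_eq_square mult_ac)
  then show ?thesis unfolding W_def using \<open>0 < t ^ k\<close> by simp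
qed

lemma nonpos_if_le_mult_small:
  fixes c a :: real
  assumes "\<And>t. 0 < t \<Longrightarrow> t \<le> 1 \<Longrightarrow> c \<le> a * t"
  shows "c \<le> 0"
proof (rule ccontr)
  assume "\<not> c \<le> 0"
  then have "0 < c" "c \<le> a" using assms[of 1] by auto
  define t where "t = c / (2 * a)"
  have "0 < t" "t \<le> 1" using \<open>0 < c\<close> \<open>c \<le> a\<close> by (auto simp: t_def field_simps)
  then have "c \<le> a * t" by (rule assms)
  also have "a * t = c / 2" using \<open>0 < c\<close> \<open>c \<le> a\<close> by (simp add: t_def)
  finally show False using \<open>0 < c\<close> by simp
qed

lemma rayleigh_support_exchange:
  assumes "finite E" and nonneg: "\<forall>S\<in>Pow E. \<omega> S \<ge> 0"
    and supp: "Q = {S\<in>Pow E. \<omega> S > 0}" and hom: "\<forall>A\<in>Q. \<forall>B\<in>Q. card A = card B"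
    and ray: "rayleigh E (genpoly E \<omega>)"
    and "B1 \<in> Q" "B2 \<in> Q" "e \<in> B1 - B2"
  shows "\<exists>f\<in>B2 - B1. insert f (B1 - {e}) \<in> Q"
proof (rule ccontr)
  assume "\<not> ?thesis"
  then have no_exchange: "\<forall>f\<in>B2 - B1. insert f (B1 - {e}) \<notin> Q" by blast
  have "finite B1" "finite B2"
    using supp \<open>B1 \<in> Q\<close> \<open>B2 \<in> Q\<close> assms(1) finite_subset by auto
  then obtain B3 g where witness: "B3 \<in> Q" "B3 \<subseteq> B1 \<union> B2" "e \<notin> B3" "g \<in> B1 - B3" "g \<noteq> e"
    "\<forall>S\<in>Q. e \<notin> S \<longrightarrow> S \<subseteq> B1 \<union> B2 \<longrightarrow> card (B3 - B1) \<le> card (S - B1)"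
    using \<open>B1 \<in> Q\<close> \<open>B2 \<in> Q\<close> \<open>e \<in> B1 - B2\<close> hom no_exchange by (rule no_exchange_minimal_witness)
  have "\<omega> B1 * \<omega> B3 \<le> (\<Sum>S\<in>Pow E. \<omega> S)\<^sup>2 * t" if "0 < t" "t \<le> 1" for t
    using \<open>e \<in> B1 - B2\<close>
    by (intro rayleigh_minimal_witness_bound[OF assms(1-5) \<open>B1 \<in> Q\<close> witness(1,2) _ witness(3-6) that]) auto
  then have "\<omega> B1 * \<omega> B3 \<le> 0" by (rule nonpos_if_le_mult_small)
  moreover have "\<omega> B1 > 0" "\<omega> B3 > 0" using supp \<open>B1 \<in> Q\<close> witness(1) by auto
  ultimately show False by (simp add: mult_le_0_iff)
qed

theorem corollary4p9:
  fixes E :: "'a set" and Q :: "'a set set"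
  assumes "finite E"
    and "Q \<subseteq> Pow E"
    and "\<forall>A\<in>Q. \<forall>B\<in>Q. card A = card B"
    and "weakly_rayleigh E Q"
  shows "matroid_bases E Q"
proof -
  obtain \<omega> where nonneg: "\<forall>S\<in>Pow E. \<omega> S \<ge> 0" and nonzero: "\<exists>S\<in>Pow E. \<omega> S \<noteq> 0"
    and supp: "{S\<in>Pow E. \<omega> S > 0} = Q" and ray: "rayleigh E (genpoly E \<omega>)"
    using assms(4) unfolding weakly_rayleigh_def by blast
  have "Q \<noteq> {}" using nonneg nonzero supp by (auto simp: order_less_le)
  then show ?thesis
    unfolding matroid_bases_def
    using rayleigh_support_exchange[OF assms(1) nonneg supp[symmetric] assms(3) ray] assms(2) by blast
qed

end
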